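(* Let $n>5$ be prime, $d\ge1$, and let $\gamma$ be a probability distribution on $\mathbb{Z}_n^d$ with $\gamma(k)\in\mathbb{Q}$ for all $k$. If the random walk on $\mathbb{Z}_n^d$ with step distribution $\gamma$ is reconstructive, then the Fourier coefficients $\{\hat{\gamma}(x)\}_{x\in\mathbb{Z}_n^d}$ are pairwise distinct.
   Context: The Fourier transform is $\hat{\gamma}(x)=\sum_{k\in\mathbb{Z}_n^d}\omega_n^{k\cdot x}\gamma(k)$, where $k\cdot x=\sum_{i=1}^d k_ix_i$ in $\mathbb{Z}_n$ and $\omega_n=e^{-2\pi i/n}$. The random walk has $v(1)$ uniform on $\mathbb{Z}_n^d$ and independent steps with $\mathbb{P}(v(t+1)-v(t)=k)=\gamma(k)$. It is reconstructive if, for any two labelings $f_1,f_2:\mathbb{Z}_n^d\to\{0,1\}$, the distributions of $\{f_1(v(t))\}_{t\ge1}$ and $\{f_2(v(t))\}_{t\ge1}$ coincide only if there is $\ell$ with $f_1(k)=f_2(k+\ell)$ for all $k$. *)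

theory Defs
  imports Complex_Main "HOL-Computational_Algebra.Primes"
begin

text \<open>Elements of Z_n^d are represented as functions nat => nat whose coordinates
  i < d lie in {0..<n} and whose coordinates i >= d are 0.\<close>

definition ZN :: "nat \<Rightarrow> nat \<Rightarrow> (nat \<Rightarrow> nat) set" where
  "ZN n d = {x. \<forall>i. (i < d \<longrightarrow> x i < n) \<and> (d \<le> i \<longrightarrow> x i = 0)}"

definition addZ :: "nat \<Rightarrow> nat \<Rightarrow> (nat \<Rightarrow> nat) \<Rightarrow> (nat \<Rightarrow> nat) \<Rightarrow> (nat \<Rightarrow> nat)" where
  "addZ n d x y = (\<lambda>i. if i < d then (x i + y i) mod n else 0)"

definition subZ :: "nat \<Rightarrow> nat \<Rightarrow> (nat \<Rightarrow> nat) \<Rightarrow> (nat \<Rightarrow> nat) \<Rightarrow> (nat \<Rightarrow> nat)" where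
  "subZ n d y x = (\<lambda>i. if i < d then (y i + n - x i) mod n else 0)"

definition prob_dist :: "nat \<Rightarrow> nat \<Rightarrow> ((nat \<Rightarrow> nat) \<Rightarrow> real) \<Rightarrow> bool" where
  "prob_dist n d \<gamma> \<longleftrightarrow> (\<forall>k\<in>ZN n d. \<gamma> k \<ge> 0) \<and> (\<Sum>k\<in>ZN n d. \<gamma> k) = 1"

definition fourier :: "nat \<Rightarrow> nat \<Rightarrow> ((nat \<Rightarrow> nat) \<Rightarrow> real) \<Rightarrow> (nat \<Rightarrow> nat) \<Rightarrow> complex" where
  "fourier n d \<gamma> x =
     (\<Sum>k\<in>ZN n d. exp (- 2 * pi * \<i> / of_nat n) ^ (\<Sum>i<d. k i * x i) * of_real (\<gamma> k))"

fun trans_prod :: "nat \<Rightarrow> nat \<Rightarrow> ((nat \<Rightarrow> nat) \<Rightarrow> real) \<Rightarrow> (nat \<Rightarrow> nat) list \<Rightarrow> real" where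
  "trans_prod n d \<gamma> (x # y # xs) = \<gamma> (subZ n d y x) * trans_prod n d \<gamma> (y # xs)"
| "trans_prod n d \<gamma> _ = 1"

text \<open>Finite-dimensional law of the label sequence: probability that
  (f(v(1)),...,f(v(m))) = w, where v(1) is uniform and steps are i.i.d. with law gamma.\<close>
definition label_law :: "nat \<Rightarrow> nat \<Rightarrow> ((nat \<Rightarrow> nat) \<Rightarrow> real) \<Rightarrow> ((nat \<Rightarrow> nat) \<Rightarrow> bool)
    \<Rightarrow> bool list \<Rightarrow> real" where
  "label_law n d \<gamma> f w =
     (\<Sum>xs\<in>{xs. length xs = length w \<and> set xs \<subseteq> ZN n d \<and> map f xs = w}.
        (1 / real (n ^ d)) * trans_prod n d \<gamma> xs)"

definition reconstructive :: "nat \<Rightarrow> nat \<Rightarrow> ((nat \<Rightarrow> nat) \<Rightarrow> real) \<Rightarrow> bool" where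
  "reconstructive n d \<gamma> \<longleftrightarrow>
     (\<forall>f1 f2 :: (nat \<Rightarrow> nat) \<Rightarrow> bool.
        (\<forall>w. label_law n d \<gamma> f1 w = label_law n d \<gamma> f2 w) \<longrightarrow>
        (\<exists>l\<in>ZN n d. \<forall>k\<in>ZN n d. f1 k = f2 (addZ n d k l)))"

end

theory Submission
  imports Defs "HOL-Computational_Algebra.Polynomial_Factorial" "HOL-Number_Theory.Cong"
begin

(*
  For z in Z_n^d let mu_z = dot_law n d gamma z be the law of k . z mod n when k has law
  gamma.  The Fourier coefficient is gamma^(z) = sum_j mu_z(j) w^j with w a primitive n-th
  root of unity.  As the cyclotomic polynomial 1 + X + ... + X^(n-1) is irreducible
  (Eisenstein at n after X := X + 1), a rational relation among 1, w, ..., w^(n-1) has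
  constant coefficients; since both laws have mass one, equal Fourier coefficients at x and y
  force mu_x = mu_y.

  A labeling g o (. z) of Z_n^d sees only the projection of the walk to Z_n, whose steps have
  law mu_z, and for z <> 0 all level sets of k . z have the same size.  Hence g o (. x) and
  g o (. y) have the same label law for every g : Z_n -> bool.  For x <> y and n > 5 a labeling
  of Z_n with two or three marked points makes g o (. x) differ from every translate of
  g o (. y), so the walk is not reconstructive.  If one of x, y is 0, then gamma lives on the
  hyperplane orthogonal to the other one, z say, and the pair z, 2z takes its place.
*)

section \<open>The cyclotomic polynomial of prime index\<close>

lemma map_poly_of_int_add:
  "map_poly (of_int :: int \<Rightarrow> 'a :: comm_ring_1) (P + Q) = map_poly of_int P + map_poly of_int Q"
  by (rule poly_eqI) (simp add: coeff_map_poly)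

lemma map_poly_of_int_mult:
  "map_poly (of_int :: int \<Rightarrow> 'a :: comm_ring_1) (P * Q) = map_poly of_int P * map_poly of_int Q"
  by (rule poly_eqI) (simp add: coeff_map_poly coeff_mult)

lemma map_poly_of_int_smult:
  "map_poly (of_int :: int \<Rightarrow> 'a :: comm_ring_1) (smult c P) = smult (of_int c) (map_poly of_int P)"
  by (rule poly_eqI) (simp add: coeff_map_poly)

lemma poly_map_of_int_monom_sum:
  "poly (map_poly (of_int :: int \<Rightarrow> 'a :: comm_ring_1) (\<Sum>j<m. monom (a j) j)) z = (\<Sum>j<m. of_int (a j) * z ^ j)"
proof -
  have "map_poly (of_int :: int \<Rightarrow> 'a) (\<Sum>j<m. monom (a j) j) = (\<Sum>j<m. monom (of_int (a j)) j)"
    by (rule poly_eqI) (simp add: coeff_map_poly coeff_sum coeff_monom of_int_sum [symmetric]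
        if_distrib cong: if_cong)
  then show ?thesis
    by (simp add: poly_sum poly_monom)
qed

lemma prime_poly_dvd_of_common_root:
  fixes P Q :: "int poly" and z :: "'a :: field_char_0"
  assumes "prime_elem P" and root_P: "poly (map_poly of_int P) z = 0"
    and root_Q: "poly (map_poly of_int Q) z = 0"
  shows "P dvd Q"
proof -
  define root where "root R \<longleftrightarrow> poly (map_poly (of_int :: int \<Rightarrow> 'a) R) z = 0" for R
  have const_no_root: "\<not> root R" if "R dvd [:c:]" "c \<noteq> 0" for R c
  proof -
    have "degree R = 0" "R \<noteq> 0"
      using dvd_imp_degree_le[OF that(1)] that by auto
    obtain c' where "R = [:c':]"
      using \<open>degree R = 0\<close> by (rule degree_eq_zeroE)
    with \<open>R \<noteq> 0\<close> show ?thesis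
      by (simp add: root_def map_poly_pCons)
  qed
  have "P \<noteq> 0"
    using \<open>prime_elem P\<close> by auto
  \<comment> \<open>a nonzero integer polynomial of least degree with root \<open>z\<close> divides a multiple
    of every other one\<close>
  have "\<exists>M. (M \<noteq> 0 \<and> root M) \<and> (\<forall>R. R \<noteq> 0 \<and> root R \<longrightarrow> degree M \<le> degree R)"
    by (rule ex_has_least_nat) (use \<open>P \<noteq> 0\<close> root_P in \<open>simp add: root_def\<close>)
  then obtain M where M: "M \<noteq> 0" "root M"
    and least: "\<And>R. R \<noteq> 0 \<Longrightarrow> root R \<Longrightarrow> degree M \<le> degree R"
    by blast
  have M_dvd: "\<exists>a. a \<noteq> 0 \<and> M dvd smult a R" if "root R" for R
  proof -
    obtain a q where "a \<noteq> 0" and a: "smult a R = M * q + pseudo_mod R M"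
      using pseudo_mod(1)[OF \<open>M \<noteq> 0\<close>] by blast
    have "root (pseudo_mod R M)"
      using arg_cong[OF a, of "\<lambda>S. poly (map_poly of_int S) z"] \<open>root R\<close> \<open>root M\<close>
      by (simp add: root_def map_poly_of_int_add map_poly_of_int_mult map_poly_of_int_smult)
    then have "pseudo_mod R M = 0"
      using least pseudo_mod(2)[OF \<open>M \<noteq> 0\<close>, of R] leD by blast
    then show ?thesis
      using \<open>a \<noteq> 0\<close> a by auto
  qed
  have "P dvd M"
  proof -
    obtain a t where "a \<noteq> 0" and "smult a P = M * t"
      using M_dvd[of P] root_P unfolding root_def by blast
    then have "P dvd M * t"
      using dvd_smult[of P P a] by simp
    moreover have "\<not> P dvd t"
    proof
      assume "P dvd t"
      then obtain s where "t = P * s" ..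
      then have "P * [:a:] = P * (M * s)"
        using \<open>smult a P = M * t\<close> by (simp add: mult_ac)
      then have "[:a:] = M * s"
        using \<open>P \<noteq> 0\<close> mult_left_cancel by blast
      then have "M dvd [:a:]" ..
      then show False
        using const_no_root \<open>a \<noteq> 0\<close> \<open>root M\<close> by blast
    qed
    ultimately show ?thesis
      using \<open>prime_elem P\<close> prime_elem_dvd_mult_iff by blast
  qed
  moreover obtain b where "b \<noteq> 0" and "M dvd [:b:] * Q"
    using M_dvd[of Q] root_Q unfolding root_def by auto
  ultimately have "P dvd [:b:] * Q"
    using dvd_trans by blast
  moreover have "\<not> P dvd [:b:]"
    using const_no_root \<open>b \<noteq> 0\<close> root_P unfolding root_def by blast
  ultimately show ?thesis
    using \<open>prime_elem P\<close> prime_elem_dvd_mult_iff by blast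
qed

lemma eisenstein_factor_degree_0:
  fixes E g h :: "int poly" and p :: int
  assumes "prime p" and E: "E = g * h" and "degree E > 0"
    and dvd_coeff: "\<And>i. i < degree E \<Longrightarrow> p dvd coeff E i"
    and "\<not> p dvd lead_coeff E" and "\<not> p dvd coeff h 0"
  shows "degree h = 0"
proof -
  have "g \<noteq> 0" "h \<noteq> 0"
    using E \<open>degree E > 0\<close> by auto
  have "lead_coeff E = lead_coeff g * lead_coeff h"
    using E by (simp add: lead_coeff_mult)
  then have "\<not> p dvd lead_coeff g"
    using \<open>\<not> p dvd lead_coeff E\<close> by auto
  define r where "r = (LEAST i. \<not> p dvd coeff g i)"
  have r: "\<not> p dvd coeff g r" "r \<le> degree g"
    unfolding r_def using \<open>\<not> p dvd lead_coeff g\<close> by (fact LeastI Least_le)+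
  have below_r: "p dvd coeff g i" if "i < r" for i
    using that not_less_Least unfolding r_def by blast
  \<comment> \<open>in the coefficient of \<open>X^r\<close> of \<open>g * h\<close> only the term \<open>coeff g r * coeff h 0\<close>
    escapes \<open>p\<close>\<close>
  have "coeff E r = (\<Sum>i<r. coeff g i * coeff h (r - i)) + coeff g r * coeff h 0"
    using E by (simp add: coeff_mult lessThan_Suc_atMost[symmetric])
  moreover have "p dvd (\<Sum>i<r. coeff g i * coeff h (r - i))"
    by (intro dvd_sum) (simp add: below_r)
  moreover have "\<not> p dvd coeff g r * coeff h 0"
    using assms(1,6) r(1) by (simp add: prime_dvd_mult_iff)
  ultimately have "\<not> p dvd coeff E r"
    by (simp add: dvd_add_right_iff)
  then have "degree E \<le> r"
    using dvd_coeff not_le by blast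
  moreover have "degree E = degree g + degree h"
    using E \<open>g \<noteq> 0\<close> \<open>h \<noteq> 0\<close> by (simp add: degree_mult_eq)
  ultimately show ?thesis
    using r(2) by linarith
qed

lemma eisenstein_criterion:
  fixes E g h :: "int poly" and p :: int
  assumes "prime p" and E: "E = g * h" and deg: "degree E > 0"
    and dvd_coeff: "\<And>i. i < degree E \<Longrightarrow> p dvd coeff E i"
    and "\<not> p\<^sup>2 dvd coeff E 0" and lead: "\<not> p dvd lead_coeff E"
  shows "degree g = 0 \<or> degree h = 0"
proof -
  have "p dvd coeff E 0"
    using deg dvd_coeff by blast
  moreover have "coeff E 0 = coeff g 0 * coeff h 0"
    using E by (simp add: coeff_mult)
  ultimately have "\<not> p dvd coeff h 0 \<or> \<not> p dvd coeff g 0"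
    using \<open>\<not> p\<^sup>2 dvd coeff E 0\<close> by (metis mult_dvd_mono power2_eq_square)
  moreover have "E = h * g"
    using E by (simp add: mult.commute)
  ultimately show ?thesis
    using eisenstein_factor_degree_0[OF \<open>prime p\<close> _ deg _ lead] dvd_coeff E by metis
qed

definition prime_cyclotomic :: "nat \<Rightarrow> int poly" where
  "prime_cyclotomic p = (\<Sum>k<p. monom 1 k)"

lemma coeff_prime_cyclotomic: "coeff (prime_cyclotomic p) j = (if j < p then 1 else 0)"
  by (simp add: prime_cyclotomic_def coeff_sum coeff_monom)

lemma pcompose_prime_cyclotomic:
  "pcompose (prime_cyclotomic p) [:1, 1:] = (\<Sum>k<p. [:1, 1:] ^ k)"
proof -
  have "pcompose ([:0, 1:] ^ k) q = q ^ k" for k and q :: "int poly"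
    by (induction k) (auto simp: pcompose_mult pcompose_pCons pcompose_1)
  then show ?thesis
    by (simp add: prime_cyclotomic_def pcompose_sum monom_altdef)
qed

lemma coeff_sum_shifted_powers:
  "coeff (\<Sum>k<p. [:1, 1:] ^ k) i = (if i < p then int (p choose Suc i) else 0)"
proof -
  have "[:0, 1:] * (\<Sum>k<p. [:1, 1::int:] ^ k) = [:1, 1:] ^ p - 1"
    using power_diff_1_eq[of "[:1, 1::int:]" p] by (simp add: one_pCons)
  from arg_cong[OF this, of "\<lambda>S. coeff S (Suc i)"]
  have "coeff (\<Sum>k<p. [:1, 1::int:] ^ k) i = coeff ([:1, 1:] ^ p) (Suc i)"
    by simp
  moreover have "degree ([:1, 1::int:] ^ p) = p"
    by (simp add: degree_linear_power)
  ultimately show ?thesis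
    by (cases "i < p") (simp_all add: coeff_linear_poly_power coeff_eq_0)
qed

lemma
  fixes p :: nat
  assumes "prime p"
  shows degree_prime_cyclotomic: "degree (prime_cyclotomic p) = p - 1"
    and irreducible_prime_cyclotomic: "irreducible (prime_cyclotomic p)"
proof -
  define S where "S = (\<Sum>k<p. [:1, 1::int:] ^ k)"
  have "p \<ge> 2"
    using assms by (rule prime_ge_2_nat)
  have coeff_S: "coeff S i = (if i < p then int (p choose Suc i) else 0)" for i
    unfolding S_def by (rule coeff_sum_shifted_powers)
  have "degree S = p - 1"
    using \<open>p \<ge> 2\<close> by (intro antisym degree_le le_degree) (auto simp: coeff_S)
  have shift: "pcompose (prime_cyclotomic p) [:1, 1:] = S"
    unfolding S_def by (rule pcompose_prime_cyclotomic)
  then show degree: "degree (prime_cyclotomic p) = p - 1"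
    using \<open>degree S = p - 1\<close> degree_pcompose[of "prime_cyclotomic p" "[:1, 1::int:]"] by simp
  have lead: "lead_coeff (prime_cyclotomic p) = 1"
    using shift lead_coeff_comp[of "[:1, 1::int:]" "prime_cyclotomic p"] \<open>degree S = p - 1\<close> \<open>p \<ge> 2\<close>
    by (simp add: coeff_S)
  \<comment> \<open>Eisenstein at \<open>p\<close> applies to \<open>S = ((X + 1)^p - 1) / X\<close>, whose coefficients
    are \<open>p choose (i + 1)\<close>\<close>
  have eisenstein_S: "degree (pcompose a [:1, 1:]) = 0 \<or> degree (pcompose b [:1, 1:]) = 0"
    if "S = pcompose a [:1, 1:] * pcompose b [:1, 1:]" for a b
  proof (rule eisenstein_criterion[OF _ that])
    show "prime (int p)"
      using assms by simp
    show "0 < degree S" and "\<not> int p dvd lead_coeff S"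
      using \<open>degree S = p - 1\<close> \<open>p \<ge> 2\<close> by (auto simp: coeff_S)
    show "int p dvd coeff S i" if "i < degree S" for i
      using that \<open>degree S = p - 1\<close> dvd_choose_prime[of "Suc i" p] assms by (auto simp: coeff_S)
    show "\<not> (int p)\<^sup>2 dvd coeff S 0"
      using \<open>p \<ge> 2\<close> by (auto simp: coeff_S power2_eq_square)
  qed
  show "irreducible (prime_cyclotomic p)"
  proof (rule irreducibleI)
    show "prime_cyclotomic p \<noteq> 0" "\<not> is_unit (prime_cyclotomic p)"
      using degree \<open>p \<ge> 2\<close> by (auto simp: is_unit_poly_iff)
  next
    fix a b assume ab: "prime_cyclotomic p = a * b"
    then have "degree a = 0 \<or> degree b = 0"
      using eisenstein_S[of a b] shift by (simp add: pcompose_mult degree_pcompose)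
    moreover have "lead_coeff a * lead_coeff b = 1"
      using ab lead by (simp add: lead_coeff_mult)
    ultimately show "is_unit a \<or> is_unit b"
      by (metis degree_eq_zeroE dvdI is_unit_poly_iff lead_coeff_pCons(2) mult.commute)
  qed
qed

lemma root_of_unity_int_relation_const:
  fixes z :: "'a :: field_char_0" and a :: "nat \<Rightarrow> int"
  assumes "prime p" and "z ^ p = 1" and "z \<noteq> 1"
    and relation: "(\<Sum>j<p. of_int (a j) * z ^ j) = 0"
  shows "\<exists>c. \<forall>j<p. a j = c"
proof -
  define R where "R = (\<Sum>j<p. monom (a j) j)"
  have coeff_R: "coeff R j = (if j < p then a j else 0)" for j
    by (simp add: R_def coeff_sum coeff_monom)
  have "z ^ p - 1 = (z - 1) * (\<Sum>j<p. z ^ j)"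
    by (rule power_diff_1_eq)
  then have "poly (map_poly of_int (prime_cyclotomic p)) z = 0"
    using assms(2,3) poly_map_of_int_monom_sum[of "\<lambda>_. 1" p z]
    by (simp add: prime_cyclotomic_def)
  moreover have "poly (map_poly of_int R) z = 0"
    using relation by (simp add: R_def poly_map_of_int_monom_sum)
  ultimately have "prime_cyclotomic p dvd R"
    by (intro prime_poly_dvd_of_common_root irreducible_imp_prime_poly
        irreducible_prime_cyclotomic[OF \<open>prime p\<close>])
  then obtain t where t: "R = prime_cyclotomic p * t" ..
  have "degree t = 0"
  proof (cases "t = 0")
    case False
    have "degree R \<le> p - 1"
      by (rule degree_le) (auto simp: coeff_R)
    moreover have "prime_cyclotomic p \<noteq> 0"
      using irreducible_prime_cyclotomic[OF \<open>prime p\<close>] by auto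
    ultimately show ?thesis
      using t False degree_mult_eq degree_prime_cyclotomic[OF \<open>prime p\<close>] by fastforce
  qed simp
  then obtain c where "t = [:c:]"
    by (rule degree_eq_zeroE)
  then have "a j = c" if "j < p" for j
    using arg_cong[OF t, of "\<lambda>S. coeff S j"] that by (simp add: coeff_R coeff_prime_cyclotomic)
  then show ?thesis
    by blast
qed

lemma Rats_common_denominator:
  fixes f :: "'b \<Rightarrow> 'a :: field_char_0"
  assumes "finite A" and "\<forall>x\<in>A. f x \<in> \<rat>"
  shows "\<exists>D::int. D > 0 \<and> (\<forall>x\<in>A. of_int D * f x \<in> \<int>)"
  using assms
proof (induction A rule: finite_induct)
  case empty
  show ?case
    by (rule exI[of _ 1]) simp
next
  case (insert y A)
  then obtain D where "D > 0" and D: "\<forall>x\<in>A. of_int D * f x \<in> \<int>"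
    by auto
  obtain a b where "b > 0" and y: "f y = of_int a / of_int b"
    using insert.prems by (auto elim: Rats_cases')
  have "of_int (D * b) * f y \<in> \<int>"
    using \<open>b > 0\<close> y by simp
  moreover have "of_int (D * b) * f x \<in> \<int>" if "x \<in> A" for x
  proof -
    have "of_int (D * b) * f x = of_int b * (of_int D * f x)"
      by simp
    then show ?thesis
      using D that by (metis Ints_mult Ints_of_int)
  qed
  ultimately show ?case
    using \<open>D > 0\<close> \<open>b > 0\<close> by (intro exI[of _ "D * b"]) auto
qed

lemma root_of_unity_rat_relation_const:
  fixes z :: complex and c :: "nat \<Rightarrow> real"
  assumes "prime p" and "z ^ p = 1" and "z \<noteq> 1"
    and "\<forall>j<p. c j \<in> \<rat>" and relation: "(\<Sum>j<p. of_real (c j) * z ^ j) = 0"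
  shows "\<exists>c0. \<forall>j<p. c j = c0"
proof -
  obtain D :: int where "D > 0" and "\<forall>j<p. of_int D * c j \<in> \<int>"
    using Rats_common_denominator[of "{..<p}" c] assms(4) by auto
  then have "\<forall>j<p. \<exists>k::int. of_int D * c j = of_int k"
    by (blast elim: Ints_cases)
  then obtain a where a: "\<forall>j<p. of_int D * c j = of_int (a j)"
    by metis
  have "(\<Sum>j<p. of_int (a j) * z ^ j) = of_int D * (\<Sum>j<p. of_real (c j) * z ^ j)"
    unfolding sum_distrib_left
  proof (rule sum.cong)
    fix j assume "j \<in> {..<p}"
    then have "(of_int (a j) :: complex) = of_real (of_int D * c j)"
      using a by simp
    then show "of_int (a j) * z ^ j = of_int D * (of_real (c j) * z ^ j)"
      by simp
  qed simp
  then obtain k where "\<forall>j<p. a j = k"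
    using root_of_unity_int_relation_const[OF assms(1-3)] relation by auto
  then have "\<forall>j<p. c j = of_int k / of_int D"
    using a \<open>D > 0\<close> by (simp add: field_simps)
  then show ?thesis
    by blast
qed

section \<open>The group \<open>\<int>\<^sub>n\<^sup>d\<close> and its characters\<close>

lemma finite_ZN: "finite (ZN n d)"
proof (rule finite_subset[OF _ finite_set_of_finite_funs])
  show "ZN n d \<subseteq> {f. \<forall>i. (i \<in> {..<d} \<longrightarrow> f i \<in> {..<n}) \<and> (i \<notin> {..<d} \<longrightarrow> f i = 0)}"
    by (auto simp: ZN_def)
qed auto

lemma addZ_in_ZN: "0 < n \<Longrightarrow> addZ n d a b \<in> ZN n d"
  by (auto simp: addZ_def ZN_def)

lemma subZ_in_ZN: "0 < n \<Longrightarrow> subZ n d a b \<in> ZN n d"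
  by (auto simp: subZ_def ZN_def)

lemma addZ_subZ: "a \<in> ZN n d \<Longrightarrow> b \<in> ZN n d \<Longrightarrow> addZ n d (subZ n d b a) a = b"
  by (auto simp: addZ_def subZ_def ZN_def fun_eq_iff mod_add_left_eq)

lemma mod_add_sub_cancel_nat:
  fixes x y n :: nat
  assumes "x < n" "y < n"
  shows "((x + y) mod n + n - y) mod n = x"
  using assms by (cases "x + y < n") (auto simp: mod_if)

lemma subZ_addZ: "a \<in> ZN n d \<Longrightarrow> k \<in> ZN n d \<Longrightarrow> subZ n d (addZ n d k a) a = k"
  by (auto simp: addZ_def subZ_def ZN_def fun_eq_iff mod_add_sub_cancel_nat)

lemma ZN_nonzero_coordinate:
  assumes "z \<in> ZN n d" and "z \<noteq> (\<lambda>_. 0)"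
  obtains i where "i < d" and "z i \<noteq> 0"
proof -
  obtain i where i: "z i \<noteq> 0"
    using assms(2) by (meson ext)
  have "i < d"
  proof (rule ccontr)
    assume "\<not> i < d"
    then show False
      using assms(1) i by (simp add: ZN_def)
  qed
  then show ?thesis
    using i that by blast
qed

definition dotZ :: "nat \<Rightarrow> nat \<Rightarrow> (nat \<Rightarrow> nat) \<Rightarrow> (nat \<Rightarrow> nat) \<Rightarrow> nat" where
  "dotZ n d z k = (\<Sum>i<d. k i * z i) mod n"

lemma dotZ_less: "0 < n \<Longrightarrow> dotZ n d z k < n"
  by (simp add: dotZ_def)

lemma dotZ_addZ: "dotZ n d z (addZ n d k a) = (dotZ n d z k + dotZ n d z a) mod n"
proof -
  have "(\<Sum>i<d. addZ n d k a i * z i) mod n = (\<Sum>i<d. (k i + a i) mod n * z i mod n) mod n"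
    by (simp add: addZ_def mod_sum_eq)
  also have "\<dots> = (\<Sum>i<d. (k i + a i) * z i) mod n"
    by (simp add: mod_mult_left_eq mod_sum_eq)
  also have "\<dots> = ((\<Sum>i<d. k i * z i) + (\<Sum>i<d. a i * z i)) mod n"
    by (simp add: algebra_simps sum.distrib)
  finally show ?thesis
    by (simp add: dotZ_def mod_add_eq)
qed

lemma dotZ_subZ:
  assumes "0 < n" "a \<in> ZN n d" "b \<in> ZN n d"
  shows "dotZ n d z (subZ n d b a) = (dotZ n d z b + n - dotZ n d z a) mod n"
proof -
  have sum: "(dotZ n d z (subZ n d b a) + dotZ n d z a) mod n = dotZ n d z b"
    using dotZ_addZ[of n d z "subZ n d b a" a] addZ_subZ[OF assms(2,3)] by simp
  have "dotZ n d z (subZ n d b a) =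
      ((dotZ n d z (subZ n d b a) + dotZ n d z a) mod n + n - dotZ n d z a) mod n"
    using mod_add_sub_cancel_nat[OF dotZ_less dotZ_less] \<open>0 < n\<close> by simp
  then show ?thesis
    by (simp only: sum)
qed

lemma dotZ_unit_multiple:
  assumes "i < d"
  shows "dotZ n d z (\<lambda>j. if j = i then t else 0) = t * z i mod n"
proof -
  have "(\<Sum>j<d. (if j = i then t else 0) * z j) = (\<Sum>j<d. if j = i then t * z i else 0)"
    by (rule sum.cong) auto
  then show ?thesis
    using assms by (simp add: dotZ_def)
qed

lemma dotZ_surjective:
  assumes "prime n" and "z \<in> ZN n d" and "z \<noteq> (\<lambda>_. 0)" and "s < n"
  obtains h where "h \<in> ZN n d" and "dotZ n d z h = s"
proof -
  obtain i where i: "i < d" "z i \<noteq> 0"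
    using assms(2,3) by (rule ZN_nonzero_coordinate)
  have "z i < n"
    using assms(2) i by (simp add: ZN_def)
  then have "coprime (z i) n"
    using \<open>prime n\<close> i(2) by (metis coprime_commute nat_dvd_not_less neq0_conv prime_imp_coprime)
  then obtain u where u: "[z i * u = 1] (mod n)"
    by (auto dest: cong_solve_coprime_nat)
  define h where "h = (\<lambda>j. if j = i then s * u mod n else 0)"
  have "[dotZ n d z h = s * u * z i] (mod n)"
    unfolding h_def dotZ_unit_multiple[OF i(1)] by (simp add: cong_def mod_mult_left_eq)
  also have "s * u * z i = s * (z i * u)"
    by (simp add: ac_simps)
  also have "[s * (z i * u) = s * 1] (mod n)"
    using u by (intro cong_mult cong_refl)
  finally have "dotZ n d z h = s"
    using \<open>s < n\<close> by (simp add: dotZ_def cong_def)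
  moreover have "h \<in> ZN n d"
    using i prime_gt_0_nat[OF \<open>prime n\<close>] by (auto simp: h_def ZN_def)
  ultimately show ?thesis
    using that by blast
qed

section \<open>Label laws as sums over paths\<close>

definition label_paths :: "nat \<Rightarrow> nat \<Rightarrow> ((nat \<Rightarrow> nat) \<Rightarrow> bool) \<Rightarrow> bool list \<Rightarrow> (nat \<Rightarrow> nat) list set" where
  "label_paths n d f w = {xs. length xs = length w \<and> set xs \<subseteq> ZN n d \<and> map f xs = w}"

lemma finite_label_paths: "finite (label_paths n d f w)"
  by (rule finite_subset[OF _ finite_lists_length_eq[OF finite_ZN, of n d "length w"]])
    (auto simp: label_paths_def)

lemma label_paths_Nil: "label_paths n d f [] = {[]}"
  by (auto simp: label_paths_def)

lemma label_paths_Cons: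
  "label_paths n d f (w # ws) = (\<lambda>(b, xs). b # xs) ` (SIGMA b:{b \<in> ZN n d. f b = w}. label_paths n d f ws)"
proof (rule set_eqI)
  fix xs
  show "xs \<in> label_paths n d f (w # ws) \<longleftrightarrow>
      xs \<in> (\<lambda>(b, xs). b # xs) ` (SIGMA b:{b \<in> ZN n d. f b = w}. label_paths n d f ws)"
    by (cases xs) (auto simp: label_paths_def)
qed

lemma sum_label_paths_Cons:
  "(\<Sum>xs\<in>label_paths n d f (w # ws). F xs) =
     (\<Sum>b\<in>{b \<in> ZN n d. f b = w}. \<Sum>xs\<in>label_paths n d f ws. F (b # xs))"
proof -
  have "inj_on (\<lambda>(b, xs). b # xs) A" for A :: "((nat \<Rightarrow> nat) \<times> (nat \<Rightarrow> nat) list) set"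
    by (auto simp: inj_on_def)
  then have "(\<Sum>xs\<in>label_paths n d f (w # ws). F xs) =
      (\<Sum>(b, xs)\<in>(SIGMA b:{b \<in> ZN n d. f b = w}. label_paths n d f ws). F (b # xs))"
    unfolding label_paths_Cons by (subst sum.reindex) (simp_all add: case_prod_beta comp_def)
  then show ?thesis
    by (simp add: sum.Sigma finite_label_paths finite_ZN)
qed

fun continuation_weight ::
  "nat \<Rightarrow> nat \<Rightarrow> ((nat \<Rightarrow> nat) \<Rightarrow> real) \<Rightarrow> ((nat \<Rightarrow> nat) \<Rightarrow> bool) \<Rightarrow> (nat \<Rightarrow> nat) \<Rightarrow> bool list \<Rightarrow> real"
where
  "continuation_weight n d \<gamma> f a [] = 1"
| "continuation_weight n d \<gamma> f a (w # ws) =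
     (\<Sum>b\<in>{b \<in> ZN n d. f b = w}. \<gamma> (subZ n d b a) * continuation_weight n d \<gamma> f b ws)"

lemma sum_trans_prod_label_paths:
  "(\<Sum>xs\<in>label_paths n d f ws. trans_prod n d \<gamma> (a # xs)) = continuation_weight n d \<gamma> f a ws"
proof (induction ws arbitrary: a)
  case Nil
  then show ?case
    by (simp add: label_paths_Nil)
next
  case (Cons w ws)
  have "(\<Sum>xs\<in>label_paths n d f (w # ws). trans_prod n d \<gamma> (a # xs)) =
      (\<Sum>b\<in>{b \<in> ZN n d. f b = w}. \<gamma> (subZ n d b a) *
        (\<Sum>xs\<in>label_paths n d f ws. trans_prod n d \<gamma> (b # xs)))"
    by (simp add: sum_label_paths_Cons sum_distrib_left)
  then show ?case
    by (simp add: Cons.IH)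
qed

lemma label_law_Cons:
  "label_law n d \<gamma> f (w # ws) =
     1 / real (n ^ d) * (\<Sum>b\<in>{b \<in> ZN n d. f b = w}. continuation_weight n d \<gamma> f b ws)"
proof -
  have "label_law n d \<gamma> f (w # ws) = (\<Sum>xs\<in>label_paths n d f (w # ws). 1 / real (n ^ d) * trans_prod n d \<gamma> xs)"
    by (simp add: label_law_def label_paths_def)
  also have "\<dots> = 1 / real (n ^ d) *
      (\<Sum>b\<in>{b \<in> ZN n d. f b = w}. \<Sum>xs\<in>label_paths n d f ws. trans_prod n d \<gamma> (b # xs))"
    by (simp only: sum_label_paths_Cons sum_distrib_left)
  finally show ?thesis
    by (simp only: sum_trans_prod_label_paths)
qed

section \<open>Labelings that factor through a character\<close>

lemma sum_ZN_group_dotZ: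
  assumes "0 < n"
  shows "(\<Sum>b\<in>{b \<in> ZN n d. P (dotZ n d z b)}. F (dotZ n d z b) b) =
    (\<Sum>t\<in>{t. t < n \<and> P t}. \<Sum>b\<in>{b \<in> ZN n d. dotZ n d z b = t}. F t b)"
proof -
  have "(\<Sum>b\<in>{b \<in> ZN n d. P (dotZ n d z b)}. F (dotZ n d z b) b) =
      (\<Sum>t\<in>{t. t < n \<and> P t}. \<Sum>b\<in>{b \<in> {b \<in> ZN n d. P (dotZ n d z b)}. dotZ n d z b = t}.
        F (dotZ n d z b) b)"
    by (rule sum.group[symmetric]) (auto simp: finite_ZN dotZ_less[OF assms])
  also have "\<dots> = (\<Sum>t\<in>{t. t < n \<and> P t}. \<Sum>b\<in>{b \<in> ZN n d. dotZ n d z b = t}. F t b)"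
    by (intro sum.cong refl) auto
  finally show ?thesis .
qed

definition dot_law :: "nat \<Rightarrow> nat \<Rightarrow> ((nat \<Rightarrow> nat) \<Rightarrow> real) \<Rightarrow> (nat \<Rightarrow> nat) \<Rightarrow> nat \<Rightarrow> real" where
  "dot_law n d \<gamma> z j = (\<Sum>k\<in>{k \<in> ZN n d. dotZ n d z k = j}. \<gamma> k)"

fun cyclic_weight :: "nat \<Rightarrow> (nat \<Rightarrow> real) \<Rightarrow> (nat \<Rightarrow> bool) \<Rightarrow> nat \<Rightarrow> bool list \<Rightarrow> real" where
  "cyclic_weight n \<mu> g s [] = 1"
| "cyclic_weight n \<mu> g s (w # ws) =
     (\<Sum>t\<in>{t. t < n \<and> g t = w}. \<mu> ((t + n - s) mod n) * cyclic_weight n \<mu> g t ws)"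

lemma sum_dotZ_fiber_shift:
  assumes "0 < n" and "a \<in> ZN n d" and "t < n"
  shows "(\<Sum>b\<in>{b \<in> ZN n d. dotZ n d z b = t}. \<gamma> (subZ n d b a)) =
    dot_law n d \<gamma> z ((t + n - dotZ n d z a) mod n)"
  unfolding dot_law_def
proof (rule sum.reindex_bij_witness[where i = "\<lambda>k. addZ n d k a" and j = "\<lambda>b. subZ n d b a"])
  fix b assume "b \<in> {b \<in> ZN n d. dotZ n d z b = t}"
  then show "addZ n d (subZ n d b a) a = b"
    and "subZ n d b a \<in> {k \<in> ZN n d. dotZ n d z k = (t + n - dotZ n d z a) mod n}"
    using addZ_subZ[OF assms(2)] dotZ_subZ[OF assms(1,2)] subZ_in_ZN[OF assms(1)] by auto
next
  fix k assume k: "k \<in> {k \<in> ZN n d. dotZ n d z k = (t + n - dotZ n d z a) mod n}"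
  then show "subZ n d (addZ n d k a) a = k"
    using subZ_addZ[OF assms(2)] by auto
  have "dotZ n d z (addZ n d k a) = (t + n - dotZ n d z a + dotZ n d z a) mod n"
    using k by (simp add: dotZ_addZ mod_add_left_eq)
  also have "\<dots> = t"
    using assms(3) dotZ_less[OF assms(1), of d z a] by simp
  finally show "addZ n d k a \<in> {b \<in> ZN n d. dotZ n d z b = t}"
    using addZ_in_ZN[OF assms(1)] by auto
qed simp

lemma continuation_weight_dotZ:
  assumes "0 < n" and "a \<in> ZN n d"
  shows "continuation_weight n d \<gamma> (\<lambda>k. g (dotZ n d z k)) a ws =
    cyclic_weight n (dot_law n d \<gamma> z) g (dotZ n d z a) ws"
  using assms(2)
proof (induction ws arbitrary: a)
  case Nil
  then show ?case
    by simp
next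
  case (Cons w ws)
  have "continuation_weight n d \<gamma> (\<lambda>k. g (dotZ n d z k)) a (w # ws) =
      (\<Sum>b\<in>{b \<in> ZN n d. g (dotZ n d z b) = w}.
        \<gamma> (subZ n d b a) * cyclic_weight n (dot_law n d \<gamma> z) g (dotZ n d z b) ws)"
    by (auto simp: Cons.IH intro: sum.cong)
  also have "\<dots> = (\<Sum>t\<in>{t. t < n \<and> g t = w}. \<Sum>b\<in>{b \<in> ZN n d. dotZ n d z b = t}.
        \<gamma> (subZ n d b a) * cyclic_weight n (dot_law n d \<gamma> z) g t ws)"
    by (rule sum_ZN_group_dotZ[OF assms(1)])
  also have "\<dots> = cyclic_weight n (dot_law n d \<gamma> z) g (dotZ n d z a) (w # ws)"
    using sum_dotZ_fiber_shift[OF assms(1) Cons.prems]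
    by (simp add: sum_distrib_right[symmetric])
  finally show ?case .
qed

lemma label_law_dotZ_Cons:
  assumes "0 < n"
  shows "label_law n d \<gamma> (\<lambda>k. g (dotZ n d z k)) (w # ws) = 1 / real (n ^ d) *
    (\<Sum>t\<in>{t. t < n \<and> g t = w}.
      real (card {a \<in> ZN n d. dotZ n d z a = t}) * cyclic_weight n (dot_law n d \<gamma> z) g t ws)"
proof -
  have "(\<Sum>b\<in>{b \<in> ZN n d. g (dotZ n d z b) = w}. continuation_weight n d \<gamma> (\<lambda>k. g (dotZ n d z k)) b ws) =
      (\<Sum>b\<in>{b \<in> ZN n d. g (dotZ n d z b) = w}. cyclic_weight n (dot_law n d \<gamma> z) g (dotZ n d z b) ws)"
    by (auto simp: continuation_weight_dotZ[OF assms] intro: sum.cong)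
  also have "\<dots> = (\<Sum>t\<in>{t. t < n \<and> g t = w}. \<Sum>b\<in>{b \<in> ZN n d. dotZ n d z b = t}.
      cyclic_weight n (dot_law n d \<gamma> z) g t ws)"
    by (rule sum_ZN_group_dotZ[OF assms])
  also have "\<dots> = (\<Sum>t\<in>{t. t < n \<and> g t = w}.
      real (card {a \<in> ZN n d. dotZ n d z a = t}) * cyclic_weight n (dot_law n d \<gamma> z) g t ws)"
    by simp
  finally show ?thesis
    by (simp add: label_law_Cons)
qed

lemma card_dotZ_fiber_le:
  assumes "prime n" and "z \<in> ZN n d" and "z \<noteq> (\<lambda>_. 0)" and "t < n" "t' < n"
  shows "card {a \<in> ZN n d. dotZ n d z a = t} \<le> card {a \<in> ZN n d. dotZ n d z a = t'}"
proof -
  have "0 < n"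
    using \<open>prime n\<close> by (rule prime_gt_0_nat)
  obtain h where h: "h \<in> ZN n d" "dotZ n d z h = (t' + n - t) mod n"
    using dotZ_surjective[OF assms(1-3)] \<open>0 < n\<close> by (metis mod_less_divisor)
  show ?thesis
  proof (rule card_inj_on_le[where f = "\<lambda>a. addZ n d a h"])
    show "inj_on (\<lambda>a. addZ n d a h) {a \<in> ZN n d. dotZ n d z a = t}"
      by (rule inj_on_inverseI[where g = "\<lambda>b. subZ n d b h"]) (auto simp: subZ_addZ[OF h(1)])
    have "dotZ n d z (addZ n d a h) = t'" if "dotZ n d z a = t" for a
    proof -
      have "dotZ n d z (addZ n d a h) = (t + (t' + n - t)) mod n"
        using that h(2) by (simp add: dotZ_addZ mod_add_right_eq)
      then show ?thesis
        using assms(4,5) by simp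
    qed
    then show "(\<lambda>a. addZ n d a h) ` {a \<in> ZN n d. dotZ n d z a = t} \<subseteq> {a \<in> ZN n d. dotZ n d z a = t'}"
      using addZ_in_ZN[OF \<open>0 < n\<close>] by auto
  qed (simp add: finite_ZN)
qed

lemma card_dotZ_fiber:
  assumes "prime n" and "z \<in> ZN n d" and "z \<noteq> (\<lambda>_. 0)" and "t < n"
  shows "n * card {a \<in> ZN n d. dotZ n d z a = t} = card (ZN n d)"
proof -
  have "0 < n"
    using \<open>prime n\<close> by (rule prime_gt_0_nat)
  have fiber: "card {a \<in> ZN n d. dotZ n d z a = s} = card {a \<in> ZN n d. dotZ n d z a = t}" if "s < n" for s
    using card_dotZ_fiber_le[OF assms(1-3)] that \<open>t < n\<close> by (simp add: le_antisym)
  have "card (ZN n d) = (\<Sum>b\<in>{b \<in> ZN n d. True}. 1)"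
    by simp
  also have "\<dots> = (\<Sum>s\<in>{s. s < n \<and> True}. \<Sum>b\<in>{b \<in> ZN n d. dotZ n d z b = s}. 1)"
    by (rule sum_ZN_group_dotZ[OF \<open>0 < n\<close>, where P = "\<lambda>_. True" and F = "\<lambda>_ _. 1"])
  also have "\<dots> = (\<Sum>s\<in>{s. s < n}. card {a \<in> ZN n d. dotZ n d z a = s})"
    by simp
  also have "\<dots> = n * card {a \<in> ZN n d. dotZ n d z a = t}"
    by (simp add: fiber)
  finally show ?thesis ..
qed

lemma label_law_dotZ_eq:
  assumes "prime n"
    and "x \<in> ZN n d" "x \<noteq> (\<lambda>_. 0)" and "y \<in> ZN n d" "y \<noteq> (\<lambda>_. 0)"
    and "dot_law n d \<gamma> x = dot_law n d \<gamma> y"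
  shows "label_law n d \<gamma> (\<lambda>k. g (dotZ n d x k)) w = label_law n d \<gamma> (\<lambda>k. g (dotZ n d y k)) w"
proof (cases w)
  case Nil
  then show ?thesis
    by (simp add: label_law_def)
next
  case (Cons v ws)
  have "0 < n"
    using \<open>prime n\<close> by (rule prime_gt_0_nat)
  have fiber: "real (card {a \<in> ZN n d. dotZ n d z a = t}) = real (card (ZN n d)) / real n"
    if "z \<in> ZN n d" "z \<noteq> (\<lambda>_. 0)" "t \<in> {t. t < n \<and> g t = v}" for z t
  proof -
    have "n * card {a \<in> ZN n d. dotZ n d z a = t} = card (ZN n d)"
      using card_dotZ_fiber[OF \<open>prime n\<close> that(1,2)] that(3) by simp
    then have "real n * real (card {a \<in> ZN n d. dotZ n d z a = t}) = real (card (ZN n d))"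
      by (metis of_nat_mult)
    then show ?thesis
      using \<open>0 < n\<close> by (simp add: field_simps)
  qed
  show ?thesis
    unfolding Cons label_law_dotZ_Cons[OF \<open>0 < n\<close>] \<open>dot_law n d \<gamma> x = dot_law n d \<gamma> y\<close>
    using fiber[OF assms(2,3)] fiber[OF assms(4,5)] by (intro arg_cong[where f = "(*) _"] sum.cong) simp_all
qed

section \<open>Fourier coefficients determine the projected step laws\<close>

lemma power_mod_of_power_eq_1:
  fixes z :: "'a :: monoid_mult"
  assumes "z ^ n = 1"
  shows "z ^ m = z ^ (m mod n)"
proof -
  have "z ^ m = z ^ (n * (m div n) + m mod n)"
    by (simp only: mult_div_mod_eq)
  also have "\<dots> = (z ^ n) ^ (m div n) * z ^ (m mod n)"
    by (simp only: power_add power_mult)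
  finally show ?thesis
    using assms by simp
qed

lemma exp_root_of_unity_power:
  assumes "0 < n"
  shows "exp (- 2 * pi * \<i> / of_nat n) ^ n = 1"
proof -
  have "exp (- 2 * pi * \<i> / of_nat n) ^ n = exp (of_nat n * (- 2 * pi * \<i> / of_nat n))"
    by (rule exp_of_nat_mult[symmetric])
  also have "\<dots> = 1"
    using assms by (simp add: exp_minus)
  finally show ?thesis .
qed

lemma exp_root_of_unity_neq_1:
  assumes "2 \<le> n"
  shows "exp (- 2 * pi * \<i> / of_nat n) \<noteq> 1"
proof -
  have "Re (exp (- 2 * pi * \<i> / of_nat n)) = cos (- 2 * pi / real n)"
    by (simp add: Re_exp)
  also have "\<dots> = cos (2 * pi / real n)"
    by (metis cos_minus minus_divide_left mult_minus_left)
  also have "\<dots> < cos 0"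
  proof (rule cos_monotone_0_pi)
    show "0 < 2 * pi / real n"
      using assms by simp
    have "2 * pi / real n \<le> 2 * pi / 2"
      using assms by (intro divide_left_mono) auto
    then show "2 * pi / real n \<le> pi"
      by simp
  qed simp
  finally show ?thesis
    by auto
qed

lemma fourier_eq_dot_law_sum:
  assumes "0 < n"
  shows "fourier n d \<gamma> x = (\<Sum>j<n. of_real (dot_law n d \<gamma> x j) * exp (- 2 * pi * \<i> / of_nat n) ^ j)"
proof -
  let ?\<omega> = "exp (- 2 * pi * \<i> / of_nat n)"
  have pow: "?\<omega> ^ m = ?\<omega> ^ (m mod n)" for m
    by (rule power_mod_of_power_eq_1[OF exp_root_of_unity_power[OF assms]])
  have "fourier n d \<gamma> x = (\<Sum>k\<in>{k \<in> ZN n d. True}. ?\<omega> ^ dotZ n d x k * of_real (\<gamma> k))"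
    unfolding fourier_def dotZ_def
  proof (rule sum.cong)
    fix k
    show "?\<omega> ^ (\<Sum>i<d. k i * x i) * of_real (\<gamma> k) = ?\<omega> ^ ((\<Sum>i<d. k i * x i) mod n) * of_real (\<gamma> k)"
      by (simp only: pow[of "\<Sum>i<d. k i * x i"])
  qed simp
  also have "\<dots> = (\<Sum>j\<in>{j. j < n \<and> True}. \<Sum>k\<in>{k \<in> ZN n d. dotZ n d x k = j}. ?\<omega> ^ j * of_real (\<gamma> k))"
    by (rule sum_ZN_group_dotZ[OF assms])
  also have "\<dots> = (\<Sum>j<n. of_real (dot_law n d \<gamma> x j) * ?\<omega> ^ j)"
    unfolding dot_law_def of_real_sum sum_distrib_right
    by (intro sum.cong) (auto simp: mult.commute)
  finally show ?thesis .
qed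

lemma sum_dot_law:
  assumes "0 < n"
  shows "(\<Sum>j<n. dot_law n d \<gamma> x j) = (\<Sum>k\<in>ZN n d. \<gamma> k)"
  using sum_ZN_group_dotZ[OF assms, where P = "\<lambda>_. True" and F = "\<lambda>_. \<gamma>"]
  by (simp add: dot_law_def lessThan_def)

lemma dot_law_eq_0:
  assumes "0 < n" and "n \<le> j"
  shows "dot_law n d \<gamma> x j = 0"
proof -
  have "{k \<in> ZN n d. dotZ n d x k = j} = {}"
    using dotZ_less[OF assms(1)] assms(2) by (auto simp: not_le[symmetric])
  then show ?thesis
    unfolding dot_law_def by (simp only: sum.empty)
qed

lemma dot_law_eq_of_fourier_eq:
  assumes "prime n" and "prob_dist n d \<gamma>" and "\<forall>k\<in>ZN n d. \<gamma> k \<in> \<rat>"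
    and "fourier n d \<gamma> x = fourier n d \<gamma> y"
  shows "dot_law n d \<gamma> x = dot_law n d \<gamma> y"
proof -
  have "0 < n" "2 \<le> n"
    using \<open>prime n\<close> by (simp_all add: prime_gt_0_nat prime_ge_2_nat)
  define c where "c j = dot_law n d \<gamma> x j - dot_law n d \<gamma> y j" for j
  have "\<forall>j<n. c j \<in> \<rat>"
    using assms(3) by (auto simp: c_def dot_law_def intro!: Rats_diff)
  moreover have "(\<Sum>j<n. of_real (c j) * exp (- 2 * pi * \<i> / of_nat n) ^ j) = 0"
    using assms(4)
    by (simp add: c_def fourier_eq_dot_law_sum[OF \<open>0 < n\<close>] left_diff_distrib sum_subtractf)
  ultimately obtain c0 where c0: "\<forall>j<n. c j = c0"
    using root_of_unity_rat_relation_const[OF \<open>prime n\<close> exp_root_of_unity_power exp_root_of_unity_neq_1]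
      \<open>0 < n\<close> \<open>2 \<le> n\<close> by blast
  have "(\<Sum>j<n. c j) = 0"
    by (simp add: c_def sum_subtractf sum_dot_law[OF \<open>0 < n\<close>])
  then have "c0 = 0"
    using c0 \<open>0 < n\<close> by simp
  show ?thesis
  proof
    fix j
    show "dot_law n d \<gamma> x j = dot_law n d \<gamma> y j"
      using c0 \<open>c0 = 0\<close> dot_law_eq_0[OF \<open>0 < n\<close>] by (cases "j < n") (auto simp: c_def)
  qed
qed

section \<open>A labeling that separates two characters\<close>

lemma dvd_diff_residues_iff:
  fixes N a b :: int
  assumes "0 \<le> a" "a < N" "0 \<le> b" "b < N"
  shows "N dvd a - b \<longleftrightarrow> a = b"
  using mod_eq_dvd_iff[of a N b] assms by simp

lemma not_dvd_small_multiple: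
  fixes N A c :: int
  assumes "prime N" and "5 < N" and "0 < A" "A < N" and "c \<noteq> 0" "\<bar>c\<bar> \<le> 5"
  shows "\<not> N dvd c * A"
proof
  assume "N dvd c * A"
  then have "N dvd \<bar>c\<bar> \<or> N dvd A"
    using \<open>prime N\<close> by (simp add: prime_dvd_mult_iff)
  then show False
    using assms zdvd_imp_le[of N "\<bar>c\<bar>"] zdvd_imp_le[of N A] by auto
qed

lemma dvd_diff_shift_iff:
  fixes N u v c :: int
  assumes "N dvd u - v"
  shows "N dvd u - c \<longleftrightarrow> N dvd v - c"
  using dvd_add_right_iff[OF assms, of "v - c"] by simp

lemma no_translation_two_marks:
  fixes N A B M :: int
  assumes "prime N" and "5 < N" and "0 \<le> A" "A < N" and "0 \<le> B" "B < N"
    and "A \<noteq> B" and "\<not> N dvd A + B"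
    and G: "\<And>v. G v \<longleftrightarrow> N dvd v \<or> N dvd v - A"
    and "G 0 = G M" "G A = G (B + M)" "G (2 * A) = G (2 * B + M)"
  shows False
proof -
  have "\<not> N dvd B - A"
    using dvd_diff_residues_iff assms(3-7) by simp
  have "N dvd M \<or> N dvd M - A" "N dvd B + M \<or> N dvd B + M - A"
    using assms(10,11) G by simp_all
  then have "N dvd B"
  proof (elim disjE)
    show "N dvd M \<Longrightarrow> N dvd B + M \<Longrightarrow> N dvd B"
      using dvd_diff[of N "B + M" M] by simp
    show "N dvd M \<Longrightarrow> N dvd B + M - A \<Longrightarrow> N dvd B"
      using dvd_diff[of N "B + M - A" M] \<open>\<not> N dvd B - A\<close> by simp
    show "N dvd M - A \<Longrightarrow> N dvd B + M \<Longrightarrow> N dvd B"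
      using dvd_diff[of N "B + M" "M - A"] \<open>\<not> N dvd A + B\<close> by (simp add: ac_simps)
    show "N dvd M - A \<Longrightarrow> N dvd B + M - A \<Longrightarrow> N dvd B"
      using dvd_diff[of N "B + M - A" "M - A"] by simp
  qed
  then have "B = 0"
    using dvd_diff_residues_iff[of B N 0] assms(5,6) by simp
  then have "0 < A"
    using assms(3,7) by simp
  have "G (2 * A)"
    using assms(10,12) \<open>B = 0\<close> G by simp
  then show False
    using G not_dvd_small_multiple[OF assms(1,2) \<open>0 < A\<close> assms(4), of 2]
      not_dvd_small_multiple[OF assms(1,2) \<open>0 < A\<close> assms(4), of 1] by simp
qed

text \<open>When \<open>B \<equiv> -A\<close> the marks \<open>0, A, 3A\<close> are needed: along \<open>t = 0, 1, 3\<close> all of \<open>M, M - A, M - 3A\<close>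
  would have to be marked, forcing two marks to differ by \<open>c A\<close> with \<open>0 < c \<le> 5\<close>.\<close>
lemma no_translation_three_marks:
  fixes N A B M :: int
  assumes "prime N" and "5 < N" and "0 \<le> A" "A < N" and "0 \<le> B" "B < N"
    and "A \<noteq> B" and "N dvd A + B"
    and G: "\<And>v. G v \<longleftrightarrow> N dvd v \<or> N dvd v - A \<or> N dvd v - 3 * A"
    and "G 0 = G M" "G A = G (B + M)" "G (3 * A) = G (3 * B + M)"
  shows False
proof -
  have "0 < A"
  proof (rule ccontr)
    assume "\<not> 0 < A"
    then have "A = 0"
      using assms(3) by simp
    then have "B = 0"
      using assms(5,6,8) dvd_diff_residues_iff[of B N 0] by simp
    then show False
      using \<open>A = 0\<close> assms(7) by simp
  qed
  have periodic: "G u \<longleftrightarrow> G v" if "N dvd u - v" for u v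
    unfolding G using dvd_diff_shift_iff[OF that, of 0] dvd_diff_shift_iff[OF that, of A]
      dvd_diff_shift_iff[OF that, of "3 * A"] by simp
  have separated: False if "N dvd p" "N dvd q" "p - q = c * A" "c \<in> {1, 2, 3, 4, 5}" for p q c
    using dvd_diff[OF that(1,2)] that(3,4)
      not_dvd_small_multiple[OF assms(1,2) \<open>0 < A\<close> assms(4), of c] by auto
  have "G M"
    using assms(10) G by simp
  have "G (M - A)"
  proof -
    have "N dvd (B + M) - (M - A)"
      using assms(8) by (simp add: algebra_simps)
    moreover have "G (B + M)"
      using assms(11) G by simp
    ultimately show ?thesis
      using periodic by blast
  qed
  have "G (M - 3 * A)"
  proof -
    have "N dvd (3 * B + M) - (M - 3 * A)"
      using dvd_mult[OF assms(8), of 3] by (simp add: algebra_simps)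
    moreover have "G (3 * B + M)"
      using assms(12) G by simp
    ultimately show ?thesis
      using periodic by blast
  qed
  from \<open>G M\<close> show False
    unfolding G
  proof (elim disjE)
    assume m: "N dvd M"
    from \<open>G (M - A)\<close> show False
      unfolding G
      using separated[OF m, of "M - A" 1] separated[OF m, of "M - A - A" 2]
        separated[OF m, of "M - A - 3 * A" 4] by auto
  next
    assume m: "N dvd M - A"
    from \<open>G (M - 3 * A)\<close> show False
      unfolding G
      using separated[OF m, of "M - 3 * A" 2] separated[OF m, of "M - 3 * A - A" 3]
        separated[OF m, of "M - 3 * A - 3 * A" 5] by auto
  next
    assume m: "N dvd M - 3 * A"
    from \<open>G (M - A)\<close> show False
      unfolding G
      using separated[OF _ m, of "M - A" 2] separated[OF _ m, of "M - A - A" 1]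
        separated[OF m, of "M - A - 3 * A" 1] by auto
  qed
qed

lemma separating_labeling:
  assumes "prime n" and "5 < n" and "x \<in> ZN n d" "y \<in> ZN n d" and "x \<noteq> y"
  obtains g :: "nat \<Rightarrow> bool"
  where "\<not> (\<exists>l\<in>ZN n d. \<forall>k\<in>ZN n d. g (dotZ n d x k) = g (dotZ n d y (addZ n d k l)))"
proof -
  obtain i where i: "i < d" "x i \<noteq> y i"
    using assms(3-5) by (auto simp: ZN_def fun_eq_iff) (metis not_le)
  define N where "N = int n"
  define A where "A = int (x i)"
  define B where "B = int (y i)"
  have "prime N" "5 < N"
    using assms(1,2) by (simp_all add: N_def)
  have AB: "0 \<le> A" "A < N" "0 \<le> B" "B < N" "A \<noteq> B"
    using assms(3,4) i by (auto simp: A_def B_def N_def ZN_def)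
  define G where "G v \<longleftrightarrow> N dvd v \<or> N dvd v - A \<or> (N dvd A + B \<and> N dvd v - 3 * A)" for v
  have G_mod: "G (v mod N) \<longleftrightarrow> G v" for v
  proof -
    have shift: "N dvd v mod N - v"
      using mod_eq_dvd_iff[of "v mod N" N v] by simp
    show ?thesis
      unfolding G_def using dvd_diff_shift_iff[OF shift, of 0] dvd_diff_shift_iff[OF shift, of A]
        dvd_diff_shift_iff[OF shift, of "3 * A"] by simp
  qed
  show ?thesis
  proof (rule that, rule notI)
    assume "\<exists>l\<in>ZN n d. \<forall>k\<in>ZN n d. G (int (dotZ n d x k)) = G (int (dotZ n d y (addZ n d k l)))"
    then obtain l where l: "\<forall>k\<in>ZN n d. G (int (dotZ n d x k)) = G (int (dotZ n d y (addZ n d k l)))"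
      by blast
    define M where "M = int (dotZ n d y l)"
    \<comment> \<open>on the line \<open>k = t e\<^sub>i\<close> the translation by \<open>l\<close> turns the test at \<open>t A\<close>
      into the test at \<open>t B + M\<close>\<close>
    have H: "G (int t * A) = G (int t * B + M)" if "t < n" for t
    proof -
      define k where "k = (\<lambda>j. if j = i then t else 0)"
      have "k \<in> ZN n d"
        using that i by (auto simp: k_def ZN_def)
      moreover have "int (dotZ n d x k) = (int t * A) mod N"
        by (simp add: k_def dotZ_unit_multiple[OF i(1)] A_def N_def zmod_int)
      moreover have "int (dotZ n d y (addZ n d k l)) = (int t * B + M) mod N"
        by (simp add: k_def dotZ_addZ dotZ_unit_multiple[OF i(1)] B_def N_def M_def zmod_int
            mod_add_left_eq)
      ultimately show ?thesis
        using l G_mod by metis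
    qed
    have "G 0 = G M" "G A = G (B + M)" "G (2 * A) = G (2 * B + M)" "G (3 * A) = G (3 * B + M)"
      using H[of 0] H[of 1] H[of 2] H[of 3] assms(2) by simp_all
    then show False
      using no_translation_two_marks[OF \<open>prime N\<close> \<open>5 < N\<close> AB, of G M]
        no_translation_three_marks[OF \<open>prime N\<close> \<open>5 < N\<close> AB, of G M]
      by (cases "N dvd A + B") (simp_all add: G_def)
  qed
qed

lemma dot_law_eq_of_support:
  assumes "\<forall>k\<in>ZN n d. \<gamma> k \<noteq> 0 \<longrightarrow> dotZ n d z k = 0 \<and> dotZ n d z' k = 0"
  shows "dot_law n d \<gamma> z = dot_law n d \<gamma> z'"
proof
  fix j
  have "dot_law n d \<gamma> z j = (\<Sum>k\<in>ZN n d. if dotZ n d z k = j then \<gamma> k else 0)"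
    by (simp add: dot_law_def sum.inter_filter finite_ZN)
  also have "\<dots> = (\<Sum>k\<in>ZN n d. if dotZ n d z' k = j then \<gamma> k else 0)"
    using assms by (intro sum.cong) auto
  also have "\<dots> = dot_law n d \<gamma> z' j"
    by (simp add: dot_law_def sum.inter_filter finite_ZN)
  finally show "dot_law n d \<gamma> z j = dot_law n d \<gamma> z' j" .
qed

lemma dotZ_of_dot_law_eq_zero:
  assumes "prob_dist n d \<gamma>" and "dot_law n d \<gamma> z = dot_law n d \<gamma> (\<lambda>_. 0)"
    and "k \<in> ZN n d" and "\<gamma> k \<noteq> 0"
  shows "dotZ n d z k = 0"
proof (rule ccontr)
  assume "dotZ n d z k \<noteq> 0"
  then have empty: "{k' \<in> ZN n d. dotZ n d (\<lambda>_. 0) k' = dotZ n d z k} = {}"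
    by (simp add: dotZ_def)
  have "dot_law n d \<gamma> z (dotZ n d z k) = 0"
    unfolding assms(2) dot_law_def empty by simp
  moreover have "\<forall>k'\<in>ZN n d. 0 \<le> \<gamma> k'"
    using assms(1) by (simp add: prob_dist_def)
  ultimately have "\<forall>k'\<in>{k' \<in> ZN n d. dotZ n d z k' = dotZ n d z k}. \<gamma> k' = 0"
    unfolding dot_law_def by (subst (asm) sum_nonneg_eq_0_iff) (auto simp: finite_ZN)
  then show False
    using assms(3,4) by simp
qed

lemma dot_law_double:
  assumes "prime n" and "2 < n" and "prob_dist n d \<gamma>"
    and "z \<in> ZN n d" "z \<noteq> (\<lambda>_. 0)" and "dot_law n d \<gamma> z = dot_law n d \<gamma> (\<lambda>_. 0)"
  obtains z' where "z' \<in> ZN n d" "z' \<noteq> (\<lambda>_. 0)" "z' \<noteq> z" "dot_law n d \<gamma> z' = dot_law n d \<gamma> z"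
proof -
  obtain i where i: "i < d" "z i \<noteq> 0"
    using assms(4,5) by (rule ZN_nonzero_coordinate)
  define z' where "z' = (\<lambda>j. if j < d then 2 * z j mod n else 0)"
  have "z' \<in> ZN n d"
    using assms(2) by (auto simp: z'_def ZN_def)
  have dotZ_z': "dotZ n d z' k = 2 * dotZ n d z k mod n" for k
  proof -
    have "(\<Sum>j<d. k j * z' j) mod n = (\<Sum>j<d. k j * (2 * z j mod n) mod n) mod n"
      by (simp add: z'_def mod_sum_eq)
    also have "\<dots> = (2 * (\<Sum>j<d. k j * z j)) mod n"
      by (simp add: mod_mult_right_eq mod_sum_eq sum_distrib_left ac_simps)
    finally show ?thesis
      by (simp add: dotZ_def mod_mult_right_eq)
  qed
  have "0 < z i" "z i < n"
    using assms(4) i by (auto simp: ZN_def)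
  then have "\<not> n dvd z i" "\<not> n dvd 2"
    using assms(2) by (auto dest: dvd_imp_le)
  then have "\<not> n dvd 2 * z i"
    using \<open>prime n\<close> by (simp add: prime_dvd_mult_iff)
  then have "z' \<noteq> (\<lambda>_. 0)"
    using i(1) by (auto simp: z'_def dvd_eq_mod_eq_0 fun_eq_iff)
  moreover have "z' \<noteq> z"
  proof
    assume "z' = z"
    then have "z' i = z i"
      by simp
    then have "2 * z i mod n = z i mod n"
      using i(1) \<open>z i < n\<close> by (simp add: z'_def)
    then have "n dvd 2 * z i - z i"
      using mod_eq_dvd_iff_nat[of "z i" "2 * z i" n] by simp
    then show False
      using \<open>\<not> n dvd z i\<close> by simp
  qed
  moreover have "dot_law n d \<gamma> z' = dot_law n d \<gamma> z"
    using dotZ_of_dot_law_eq_zero[OF assms(3,6)] dotZ_z'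
    by (intro dot_law_eq_of_support) simp
  ultimately show ?thesis
    using that \<open>z' \<in> ZN n d\<close> by blast
qed

lemma not_reconstructive_of_dot_law_eq:
  assumes "prime n" and "5 < n"
    and "x \<in> ZN n d" "x \<noteq> (\<lambda>_. 0)" and "y \<in> ZN n d" "y \<noteq> (\<lambda>_. 0)" and "x \<noteq> y"
    and "dot_law n d \<gamma> x = dot_law n d \<gamma> y"
  shows "\<not> reconstructive n d \<gamma>"
proof
  assume "reconstructive n d \<gamma>"
  obtain g :: "nat \<Rightarrow> bool" where g: "\<not> (\<exists>l\<in>ZN n d. \<forall>k\<in>ZN n d. g (dotZ n d x k) = g (dotZ n d y (addZ n d k l)))"
    using separating_labeling[OF assms(1,2,3,5,7)] by blast
  have "\<forall>w. label_law n d \<gamma> (\<lambda>k. g (dotZ n d x k)) w = label_law n d \<gamma> (\<lambda>k. g (dotZ n d y k)) w"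
    using label_law_dotZ_eq[OF assms(1,3-6,8)] by blast
  then show False
    using \<open>reconstructive n d \<gamma>\<close> g unfolding reconstructive_def by blast
qed

lemma nonzero_dot_law_collision:
  assumes "prime n" and "2 < n" and "prob_dist n d \<gamma>"
    and "x \<in> ZN n d" "y \<in> ZN n d" "x \<noteq> y" and "dot_law n d \<gamma> x = dot_law n d \<gamma> y"
  obtains x' y' where "x' \<in> ZN n d" "x' \<noteq> (\<lambda>_. 0)" "y' \<in> ZN n d" "y' \<noteq> (\<lambda>_. 0)" "x' \<noteq> y'"
    and "dot_law n d \<gamma> x' = dot_law n d \<gamma> y'"
proof (cases "x = (\<lambda>_. 0)")
  case True
  then have "y \<noteq> (\<lambda>_. 0)" "dot_law n d \<gamma> y = dot_law n d \<gamma> (\<lambda>_. 0)"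
    using assms(6,7) by auto
  then obtain y' where "y' \<in> ZN n d" "y' \<noteq> (\<lambda>_. 0)" "y' \<noteq> y" "dot_law n d \<gamma> y' = dot_law n d \<gamma> y"
    using dot_law_double[OF assms(1-3,5)] by blast
  then show ?thesis
    using that[of y' y] assms(5) \<open>y \<noteq> (\<lambda>_. 0)\<close> by blast
next
  case False
  show ?thesis
  proof (cases "y = (\<lambda>_. 0)")
    case True
    then have "dot_law n d \<gamma> x = dot_law n d \<gamma> (\<lambda>_. 0)"
      using assms(7) by simp
    then obtain x' where "x' \<in> ZN n d" "x' \<noteq> (\<lambda>_. 0)" "x' \<noteq> x" "dot_law n d \<gamma> x' = dot_law n d \<gamma> x"
      using dot_law_double[OF assms(1-4) False] by blast
    then show ?thesis
      using that[of x' x] assms(4) False by blast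
  qed (use that assms False in blast)
qed

theorem theorem7:
  fixes n d :: nat and \<gamma> :: "(nat \<Rightarrow> nat) \<Rightarrow> real"
  assumes "prime n" and "n > 5" and "d \<ge> 1"
    and "prob_dist n d \<gamma>"
    and "\<forall>k\<in>ZN n d. \<gamma> k \<in> \<rat>"
    and "reconstructive n d \<gamma>"
  shows "\<forall>x\<in>ZN n d. \<forall>y\<in>ZN n d. x \<noteq> y \<longrightarrow> fourier n d \<gamma> x \<noteq> fourier n d \<gamma> y"
proof (intro ballI impI notI)
  fix x y
  assume "x \<in> ZN n d" "y \<in> ZN n d" "x \<noteq> y" and "fourier n d \<gamma> x = fourier n d \<gamma> y"
  then have "dot_law n d \<gamma> x = dot_law n d \<gamma> y"
    using dot_law_eq_of_fourier_eq[OF assms(1,4,5)] by blast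
  moreover have "2 < n"
    using \<open>n > 5\<close> by simp
  ultimately obtain x' y' where "x' \<in> ZN n d" "x' \<noteq> (\<lambda>_. 0)" "y' \<in> ZN n d" "y' \<noteq> (\<lambda>_. 0)" "x' \<noteq> y'"
    and "dot_law n d \<gamma> x' = dot_law n d \<gamma> y'"
    using nonzero_dot_law_collision[OF assms(1) _ assms(4)] \<open>x \<in> ZN n d\<close> \<open>y \<in> ZN n d\<close> \<open>x \<noteq> y\<close>
    by blast
  then show False
    using not_reconstructive_of_dot_law_eq[OF assms(1,2)] assms(6) by blast
qed

end
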